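(* For every choice of environment function $Env()$, ESAdapt under the reward function $Rew_{CodeB}()$ is unsolvable: there is no algorithm (Turing machine), regardless of running time or memory, that produces the correct output for every instance.
   Context: Model. Let $X=\{x_1,\dots,x_{|X|}\}$ be Boolean variables and $O$ a finite output set. Software system requirements are a finite set $R$ of pairs $(i,o)$, where $i$ is a truth assignment to $X$ and $o\in O$. Interfaces and components follow the Dana runtime component model: an interface is a set of function prototypes (function name, return type, parameter types) together with a set of typed transfer fields; a component provides one or more interfaces and requires zero or more interfaces, and contains code (in a Dana-like imperative language with assignments, conditionals, loops, arrays, function calls and an output statement; this language can simulate any Turing machine) implementing every function of its provided interfaces; this code may call functions and use transfer fields of its required interfaces. $L_{int}$ and $L_{comp}$ are finite libraries of interfaces and components. Given a base component $c\in L_{comp}$ implementing a function main, a valid component-based software system $S$ based on $c$ is obtained by choosing, for each required interface of $c$, a component of $L_{comp}$ providing it, and recursively for each required interface of every chosen component; separate copies of a component are used for separate required-interface occurrences, and when a component providing several interfaces implements one of them, only a reduced copy containing that interface's code is used. Its component wiring tree has root $c$, vertices the chosen component copies, arcs labelled by the implemented interfaces; no component label may occur twice on a root-to-leaf path. $S$ is working relative to $R$ if for every $(i,o)\in R$, running $S$ on input $i$ outputs $o$. An environment function $Env()$ maps a system to events/metric values and is computable in polynomial time. $Rew_{CodeB}(S)$ is the total number of lines of code in the interfaces and components comprising $S$. Problem ESAdapt under $Rew_{CodeB}()$: Input: $R$, $L_{int}$, $L_{comp}$, a working system $S$ based on a component $c\in L_{comp}$ relative to $R$, $L_{int}$, $L_{comp}$,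 and $Env()$. Output: a working system $S'$ based on $c$ relative to $L_{int},L_{comp},R$ having the smallest value of $Rew_{CodeB}(S')$ over all working systems based on $c$ relative to $L_{int},L_{comp},R$. *)

theory Defs
  imports Main
begin

type_synonym name = nat

datatype ty = TInt | TBool | TVoid | TArr ty

section \<open>A Dana-like imperative language\<close>

text \<open>Booleans are represented by integers (0 = false).
  ReqField k f reads transfer field f of the k-th required interface of the
  component; ProvField f reads transfer field f of the interface the component
  copy provides.  Input k reads the value (0/1) of the Boolean input variable x_(k+1).\<close>
datatype aexp =
    Num int
  | Var name
  | Input nat
  | Plus aexp aexp
  | Sub aexp aexp
  | Mult aexp aexp
  | Less aexp aexp
  | Equal aexp aexp
  | ArrGet name aexp
  | ReqField nat name
  | ProvField name

text \<open>Statements.  CallF x k f args assigns to x the result of calling function f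
  of the k-th required interface; Output e is the output statement.\<close>
datatype com =
    Skip
  | Assign name aexp
  | ArrSet name aexp aexp
  | SetReqField nat name aexp
  | SetProvField name aexp
  | Seq com com
  | If aexp com com
  | While aexp com
  | CallF name nat name "aexp list"
  | Output aexp

datatype fdef = FDef (fd_name: name) (fd_params: "name list") (fd_body: com) (fd_ret: aexp)

datatype proto = Proto (pr_name: name) (pr_ret: ty) (pr_params: "ty list")

datatype iface = Iface (if_name: name) (if_protos: "proto list") (if_fields: "(name \<times> ty) list")

datatype comp = Comp (c_name: name) (c_provides: "name list") (c_requires: "name list")
  (c_funs: "fdef list")

text \<open>Component wiring tree: a vertex is a component copy; the k-th child implements
  the k-th required interface of its parent (the arc label).\<close>
datatype wtree = WNode (w_comp: comp) (w_kids: "wtree list")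

definition iface_of :: "iface list \<Rightarrow> name \<Rightarrow> iface" where
  "iface_of L n = (case find (\<lambda>I. if_name I = n) L of Some I \<Rightarrow> I | None \<Rightarrow> Iface n [] [])"

text \<open>Code of a component copy: the full code for the root (None), and the reduced
  copy containing only the functions of interface n when it implements n (Some n).\<close>
definition funs_of :: "iface list \<Rightarrow> name option \<Rightarrow> comp \<Rightarrow> fdef list" where
  "funs_of L io c = (case io of None \<Rightarrow> c_funs c
     | Some n \<Rightarrow> filter (\<lambda>d. fd_name d \<in> set (map pr_name (if_protos (iface_of L n)))) (c_funs c))"

definition wf_libs :: "iface list \<Rightarrow> comp list \<Rightarrow> bool" where
  "wf_libs Li Lc \<longleftrightarrow>
     distinct (map if_name Li) \<and>
     (\<forall>c \<in> set Lc. c_provides c \<noteq> [] \<and>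
        set (c_provides c) \<subseteq> set (map if_name Li) \<and>
        set (c_requires c) \<subseteq> set (map if_name Li) \<and>
        (\<forall>n \<in> set (c_provides c). \<forall>pr \<in> set (if_protos (iface_of Li n)).
           \<exists>d \<in> set (c_funs c). fd_name d = pr_name pr \<and> length (fd_params d) = length (pr_params pr)))"

text \<open>validT Lc vis io t: t is a valid wiring (sub)tree whose root implements the
  interface io (None for the base component), using components of Lc, and no
  component label of t occurs in vis (the labels above it on the path) or twice on
  a root-to-leaf path.\<close>
fun validT :: "comp list \<Rightarrow> comp list \<Rightarrow> name option \<Rightarrow> wtree \<Rightarrow> bool"
and validTs :: "comp list \<Rightarrow> comp list \<Rightarrow> name list \<Rightarrow> wtree list \<Rightarrow> bool" where
  "validT Lc vis io (WNode c ks) \<longleftrightarrow>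
     c \<in> set Lc \<and> c \<notin> set vis \<and>
     (case io of None \<Rightarrow> True | Some n \<Rightarrow> n \<in> set (c_provides c)) \<and>
     validTs Lc (c # vis) (c_requires c) ks"
| "validTs Lc vis [] [] = True"
| "validTs Lc vis (n # ns) (t # ts) \<longleftrightarrow> validT Lc vis (Some n) t \<and> validTs Lc vis ns ts"
| "validTs Lc vis (n # ns) [] = False"
| "validTs Lc vis [] (t # ts) = False"

definition system_based :: "comp list \<Rightarrow> comp \<Rightarrow> wtree \<Rightarrow> bool" where
  "system_based Lc c S \<longleftrightarrow> w_comp S = c \<and> validT Lc [] None S"

text \<open>State: scalar locals, array locals, transfer field store (indexed by the path
  of the providing component copy in the wiring tree), output sequence.\<close>
type_synonym state = "(name \<Rightarrow> int) \<times> (name \<Rightarrow> int \<Rightarrow> int) \<times> (nat list \<Rightarrow> name \<Rightarrow> int) \<times> int list"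

fun aval :: "bool list \<Rightarrow> nat list \<Rightarrow> state \<Rightarrow> aexp \<Rightarrow> int" where
  "aval i p s (Num n) = n"
| "aval i p (sc, ar, F, os) (Var x) = sc x"
| "aval i p s (Input k) = (if k < length i \<and> i ! k then 1 else 0)"
| "aval i p s (Plus a b) = aval i p s a + aval i p s b"
| "aval i p s (Sub a b) = aval i p s a - aval i p s b"
| "aval i p s (Mult a b) = aval i p s a * aval i p s b"
| "aval i p s (Less a b) = (if aval i p s a < aval i p s b then 1 else 0)"
| "aval i p s (Equal a b) = (if aval i p s a = aval i p s b then 1 else 0)"
| "aval i p (sc, ar, F, os) (ArrGet x a) = ar x (aval i p (sc, ar, F, os) a)"
| "aval i p (sc, ar, F, os) (ReqField k f) = F (p @ [k]) f"
| "aval i p (sc, ar, F, os) (ProvField f) = F p f"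

definition bind_params :: "name list \<Rightarrow> int list \<Rightarrow> name \<Rightarrow> int" where
  "bind_params ps vs = foldr (\<lambda>(x, v) s. s(x := v)) (zip ps vs) (\<lambda>_. 0)"

text \<open>exec L i p io t c s s': executing statement c in the component copy at vertex t
  (at path p, implementing interface io) on input i transforms s into s'.\<close>
inductive exec :: "iface list \<Rightarrow> bool list \<Rightarrow> nat list \<Rightarrow> name option \<Rightarrow> wtree \<Rightarrow> com
    \<Rightarrow> state \<Rightarrow> state \<Rightarrow> bool" where
  ExSkip: "exec L i p io t Skip s s"
| ExAssign: "s = (sc, ar, F, os) \<Longrightarrow>
    exec L i p io t (Assign x e) s (sc(x := aval i p s e), ar, F, os)"
| ExArrSet: "s = (sc, ar, F, os) \<Longrightarrow>
    exec L i p io t (ArrSet x e1 e2) s (sc, ar(x := (ar x)(aval i p s e1 := aval i p s e2)), F, os)"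
| ExReqF: "s = (sc, ar, F, os) \<Longrightarrow>
    exec L i p io t (SetReqField k f e) s (sc, ar, F((p @ [k]) := (F (p @ [k]))(f := aval i p s e)), os)"
| ExProvF: "s = (sc, ar, F, os) \<Longrightarrow>
    exec L i p io t (SetProvField f e) s (sc, ar, F(p := (F p)(f := aval i p s e)), os)"
| ExSeq: "exec L i p io t c1 s s1 \<Longrightarrow> exec L i p io t c2 s1 s2 \<Longrightarrow>
    exec L i p io t (Seq c1 c2) s s2"
| ExIfT: "aval i p s e \<noteq> 0 \<Longrightarrow> exec L i p io t c1 s s' \<Longrightarrow> exec L i p io t (If e c1 c2) s s'"
| ExIfF: "aval i p s e = 0 \<Longrightarrow> exec L i p io t c2 s s' \<Longrightarrow> exec L i p io t (If e c1 c2) s s'"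
| ExWhileF: "aval i p s e = 0 \<Longrightarrow> exec L i p io t (While e c) s s"
| ExWhileT: "aval i p s e \<noteq> 0 \<Longrightarrow> exec L i p io t c s s1 \<Longrightarrow>
    exec L i p io t (While e c) s1 s2 \<Longrightarrow> exec L i p io t (While e c) s s2"
| ExCall: "s = (sc, ar, F, os) \<Longrightarrow> t = WNode c ks \<Longrightarrow>
    k < length ks \<Longrightarrow> k < length (c_requires c) \<Longrightarrow> n = c_requires c ! k \<Longrightarrow>
    find (\<lambda>d. fd_name d = f) (funs_of L (Some n) (w_comp (ks ! k))) = Some (FDef f ps body re) \<Longrightarrow>
    length ps = length args \<Longrightarrow>
    exec L i (p @ [k]) (Some n) (ks ! k) body
      (bind_params ps (map (aval i p s) args), (\<lambda>_ _. 0), F, os) s1 \<Longrightarrow>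
    s1 = (sc1, ar1, F1, os1) \<Longrightarrow>
    exec L i p io t (CallF x k f args) s (sc(x := aval i (p @ [k]) s1 re), ar, F1, os1)"
| ExOut: "s = (sc, ar, F, os) \<Longrightarrow>
    exec L i p io t (Output e) s (sc, ar, F, os @ [aval i p s e])"

definition main_name :: name where "main_name = 0"

definition runs_output :: "iface list \<Rightarrow> wtree \<Rightarrow> bool list \<Rightarrow> int \<Rightarrow> bool" where
  "runs_output L S i out \<longleftrightarrow>
     (\<exists>ps body re s'. find (\<lambda>d. fd_name d = main_name) (c_funs (w_comp S)) = Some (FDef main_name ps body re) \<and>
        exec L i [] None S body ((\<lambda>_. 0), (\<lambda>_ _. 0), (\<lambda>_ _. 0), []) s' \<and>
        snd (snd (snd s')) = [out])"

definition working :: "(bool list \<times> int) list \<Rightarrow> iface list \<Rightarrow> wtree \<Rightarrow> bool" where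
  "working R L S \<longleftrightarrow> (\<forall>(i, out) \<in> set R. runs_output L S i out)"

fun loc_com :: "com \<Rightarrow> nat" where
  "loc_com (Seq c1 c2) = loc_com c1 + loc_com c2"
| "loc_com (If e c1 c2) = 2 + loc_com c1 + loc_com c2"
| "loc_com (While e c) = 1 + loc_com c"
| "loc_com c = 1"

definition loc_fdef :: "fdef \<Rightarrow> nat" where
  "loc_fdef d = 2 + loc_com (fd_body d)"

definition loc_iface :: "iface \<Rightarrow> nat" where
  "loc_iface I = 1 + length (if_protos I) + length (if_fields I)"

definition loc_copy :: "iface list \<Rightarrow> name option \<Rightarrow> comp \<Rightarrow> nat" where
  "loc_copy L io c = 1 + length (c_requires c) + sum_list (map loc_fdef (funs_of L io c))"

text \<open>Rew_CodeB: lines of code of all component copies (vertices) and of the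
  interfaces labelling the arcs of the wiring tree.\<close>
fun codeB :: "iface list \<Rightarrow> name option \<Rightarrow> wtree \<Rightarrow> nat"
and codeBs :: "iface list \<Rightarrow> name list \<Rightarrow> wtree list \<Rightarrow> nat" where
  "codeB L io (WNode c ks) = loc_copy L io c + codeBs L (c_requires c) ks"
| "codeBs L (n # ns) (t # ts) = loc_iface (iface_of L n) + codeB L (Some n) t + codeBs L ns ts"
| "codeBs L [] ts = 0"
| "codeBs L ns [] = 0"

definition Rew_CodeB :: "iface list \<Rightarrow> wtree \<Rightarrow> nat" where
  "Rew_CodeB L S = codeB L None S"

definition esadapt_instance :: "(bool list \<times> int) list \<Rightarrow> iface list \<Rightarrow> comp list \<Rightarrow> wtree \<Rightarrow> bool" where
  "esadapt_instance R Li Lc S \<longleftrightarrow>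
     wf_libs Li Lc \<and>
     (\<exists>nX. \<forall>(i, out) \<in> set R. length i = nX) \<and>
     system_based Lc (w_comp S) S \<and> working R Li S"

definition esadapt_codeB_solution :: "(bool list \<times> int) list \<Rightarrow> iface list \<Rightarrow> comp list \<Rightarrow> wtree \<Rightarrow> wtree \<Rightarrow> bool" where
  "esadapt_codeB_solution R Li Lc S S' \<longleftrightarrow>
     system_based Lc (w_comp S) S' \<and> working R Li S' \<and>
     (\<forall>S''. system_based Lc (w_comp S) S'' \<and> working R Li S'' \<longrightarrow> Rew_CodeB Li S' \<le> Rew_CodeB Li S'')"

section \<open>Model of algorithms: the WHILE language over binary trees (Jones)\<close>

datatype D = DNil | DCons D D

datatype wexp = WVar nat | WNilE | WConsE wexp wexp | WHd wexp | WTl wexp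

datatype wcom = WAsg nat wexp | WSeq wcom wcom | WWhile wexp wcom

fun wval :: "(nat \<Rightarrow> D) \<Rightarrow> wexp \<Rightarrow> D" where
  "wval \<sigma> (WVar x) = \<sigma> x"
| "wval \<sigma> WNilE = DNil"
| "wval \<sigma> (WConsE a b) = DCons (wval \<sigma> a) (wval \<sigma> b)"
| "wval \<sigma> (WHd a) = (case wval \<sigma> a of DCons l r \<Rightarrow> l | DNil \<Rightarrow> DNil)"
| "wval \<sigma> (WTl a) = (case wval \<sigma> a of DCons l r \<Rightarrow> r | DNil \<Rightarrow> DNil)"

inductive wexec :: "wcom \<Rightarrow> (nat \<Rightarrow> D) \<Rightarrow> (nat \<Rightarrow> D) \<Rightarrow> bool" where
  "wexec (WAsg x e) \<sigma> (\<sigma>(x := wval \<sigma> e))"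
| "wexec c1 \<sigma> \<sigma>1 \<Longrightarrow> wexec c2 \<sigma>1 \<sigma>2 \<Longrightarrow> wexec (WSeq c1 c2) \<sigma> \<sigma>2"
| "wval \<sigma> e = DNil \<Longrightarrow> wexec (WWhile e c) \<sigma> \<sigma>"
| "wval \<sigma> e \<noteq> DNil \<Longrightarrow> wexec c \<sigma> \<sigma>1 \<Longrightarrow> wexec (WWhile e c) \<sigma>1 \<sigma>2 \<Longrightarrow> wexec (WWhile e c) \<sigma> \<sigma>2"

definition wcomputes :: "wcom \<Rightarrow> D \<Rightarrow> D \<Rightarrow> bool" where
  "wcomputes P x y \<longleftrightarrow> (\<exists>\<sigma>'. wexec P (\<lambda>v. if v = 0 then x else DNil) \<sigma>' \<and> \<sigma>' 1 = y)"

section \<open>Encoding of instances and systems as binary trees\<close>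

fun enc_nat :: "nat \<Rightarrow> D" where
  "enc_nat 0 = DNil"
| "enc_nat (Suc n) = DCons DNil (enc_nat n)"

definition enc_bool :: "bool \<Rightarrow> D" where
  "enc_bool b = (if b then DCons DNil DNil else DNil)"

definition enc_int :: "int \<Rightarrow> D" where
  "enc_int z = DCons (enc_bool (0 \<le> z)) (enc_nat (nat \<bar>z\<bar>))"

definition enc_dl :: "D list \<Rightarrow> D" where
  "enc_dl ds = foldr DCons ds DNil"

definition tag :: "nat \<Rightarrow> D list \<Rightarrow> D" where
  "tag n ds = DCons (enc_nat n) (enc_dl ds)"

fun enc_ty :: "ty \<Rightarrow> D" where
  "enc_ty TInt = tag 0 []"
| "enc_ty TBool = tag 1 []"
| "enc_ty TVoid = tag 2 []"
| "enc_ty (TArr t) = tag 3 [enc_ty t]"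

fun enc_aexp :: "aexp \<Rightarrow> D" where
  "enc_aexp (Num n) = tag 0 [enc_int n]"
| "enc_aexp (Var x) = tag 1 [enc_nat x]"
| "enc_aexp (Input k) = tag 2 [enc_nat k]"
| "enc_aexp (Plus a b) = tag 3 [enc_aexp a, enc_aexp b]"
| "enc_aexp (Sub a b) = tag 4 [enc_aexp a, enc_aexp b]"
| "enc_aexp (Mult a b) = tag 5 [enc_aexp a, enc_aexp b]"
| "enc_aexp (Less a b) = tag 6 [enc_aexp a, enc_aexp b]"
| "enc_aexp (Equal a b) = tag 7 [enc_aexp a, enc_aexp b]"
| "enc_aexp (ArrGet x a) = tag 8 [enc_nat x, enc_aexp a]"
| "enc_aexp (ReqField k f) = tag 9 [enc_nat k, enc_nat f]"
| "enc_aexp (ProvField f) = tag 10 [enc_nat f]"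

fun enc_com :: "com \<Rightarrow> D" where
  "enc_com Skip = tag 0 []"
| "enc_com (Assign x e) = tag 1 [enc_nat x, enc_aexp e]"
| "enc_com (ArrSet x e1 e2) = tag 2 [enc_nat x, enc_aexp e1, enc_aexp e2]"
| "enc_com (SetReqField k f e) = tag 3 [enc_nat k, enc_nat f, enc_aexp e]"
| "enc_com (SetProvField f e) = tag 4 [enc_nat f, enc_aexp e]"
| "enc_com (Seq c1 c2) = tag 5 [enc_com c1, enc_com c2]"
| "enc_com (If e c1 c2) = tag 6 [enc_aexp e, enc_com c1, enc_com c2]"
| "enc_com (While e c) = tag 7 [enc_aexp e, enc_com c]"
| "enc_com (CallF x k f args) = tag 8 [enc_nat x, enc_nat k, enc_nat f, enc_dl (map enc_aexp args)]"
| "enc_com (Output e) = tag 9 [enc_aexp e]"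

fun enc_fdef :: "fdef \<Rightarrow> D" where
  "enc_fdef (FDef f ps body re) = tag 0 [enc_nat f, enc_dl (map enc_nat ps), enc_com body, enc_aexp re]"

fun enc_proto :: "proto \<Rightarrow> D" where
  "enc_proto (Proto f r ps) = tag 0 [enc_nat f, enc_ty r, enc_dl (map enc_ty ps)]"

fun enc_iface :: "iface \<Rightarrow> D" where
  "enc_iface (Iface n prs fs) = tag 0 [enc_nat n, enc_dl (map enc_proto prs),
     enc_dl (map (\<lambda>(f, t). DCons (enc_nat f) (enc_ty t)) fs)]"

fun enc_comp :: "comp \<Rightarrow> D" where
  "enc_comp (Comp n pv rq fs) = tag 0 [enc_nat n, enc_dl (map enc_nat pv), enc_dl (map enc_nat rq),
     enc_dl (map enc_fdef fs)]"

fun enc_wtree :: "wtree \<Rightarrow> D" where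
  "enc_wtree (WNode c ks) = tag 0 [enc_comp c, enc_dl (map enc_wtree ks)]"

definition enc_req :: "(bool list \<times> int) list \<Rightarrow> D" where
  "enc_req R = enc_dl (map (\<lambda>(i, out). DCons (enc_dl (map enc_bool i)) (enc_int out)) R)"

definition enc_instance :: "(bool list \<times> int) list \<Rightarrow> iface list \<Rightarrow> comp list \<Rightarrow> wtree \<Rightarrow> D" where
  "enc_instance R Li Lc S = tag 0 [enc_req R, enc_dl (map enc_iface Li), enc_dl (map enc_comp Lc), enc_wtree S]"

definition solves_ESAdapt_codeB :: "wcom \<Rightarrow> bool" where
  "solves_ESAdapt_codeB P \<longleftrightarrow>
     (\<forall>R Li Lc S. esadapt_instance R Li Lc S \<longrightarrow>
        (\<exists>S'. esadapt_codeB_solution R Li Lc S S' \<and> wcomputes P (enc_instance R Li Lc S) (enc_wtree S')))"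

end

theory Submission
  imports Defs
begin

(* Diagonalisation.  Suppose a WHILE program P solved the problem.  Take a base component whose
   main calls a function f and outputs the result, and two providers of f: a padded one that
   always returns 1, and a strictly shorter diagonal one that returns 1 exactly when P, run on
   this very instance, selects the padded system.  If P selects the padded system, the diagonal
   system works as well and is cheaper; if P selects the diagonal system, it outputs 0 and does
   not work.

   The diagonal component can run P because the arithmetic fragment of the component language
   simulates WHILE programs on integer codes of binary trees (Cantor pairing).  It obtains the
   instance containing itself by the quine trick: its code contains a literal n, the code of the
   instance with 0 in place of n, and it rebuilds the instance by writing the encoding of n into
   that hole. *)

section \<open>Coding binary trees as integers\<close>

(* The + 1 keeps the codes of pairs apart from the code 0 of DNil. *)
definition cantor_pair :: "int \<Rightarrow> int \<Rightarrow> int" where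
  "cantor_pair a b = (a + b) * (a + b) + b + 1"

lemma cantor_pair_pos:
  assumes "0 \<le> a" "0 \<le> b"
  shows "0 < cantor_pair a b"
  using assms by (simp add: cantor_pair_def add_nonneg_pos)

lemma cantor_pair_mono_sum:
  fixes a b c d :: int
  assumes "0 \<le> a" "0 \<le> b" "0 \<le> c" "0 \<le> d" "a + b < c + d"
  shows "cantor_pair a b < cantor_pair c d"
proof -
  have "cantor_pair a b \<le> (a + b + 1) * (a + b + 1)"
    using assms by (simp add: cantor_pair_def algebra_simps)
  also have "\<dots> \<le> (c + d) * (c + d)" using assms by (intro mult_mono) auto
  also have "\<dots> < cantor_pair c d" using assms by (simp add: cantor_pair_def)
  finally show ?thesis .
qed

lemma cantor_pair_inject:
  fixes a b c d :: int
  assumes "0 \<le> a" "0 \<le> b" "0 \<le> c" "0 \<le> d" "cantor_pair a b = cantor_pair c d"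
  shows "a = c \<and> b = d"
proof -
  have "a + b = c + d"
    using cantor_pair_mono_sum[of a b c d] cantor_pair_mono_sum[of c d a b] assms
    by (metis less_irrefl not_less_iff_gr_or_eq)
  with assms show ?thesis by (simp add: cantor_pair_def)
qed

fun int_of_D :: "D \<Rightarrow> int" where
  "int_of_D DNil = 0"
| "int_of_D (DCons a b) = cantor_pair (int_of_D a) (int_of_D b)"

lemma int_of_D_nonneg: "0 \<le> int_of_D t"
  by (induction t) (auto simp: cantor_pair_def)

lemma int_of_D_eq_0_iff: "int_of_D t = 0 \<longleftrightarrow> t = DNil"
proof (cases t)
  case (DCons a b)
  then show ?thesis using cantor_pair_pos[OF int_of_D_nonneg int_of_D_nonneg, of a b] by simp
qed simp

lemma inj_int_of_D: "inj int_of_D"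
proof (rule injI)
  fix s t show "int_of_D s = int_of_D t \<Longrightarrow> s = t"
  proof (induction s arbitrary: t)
    case DNil
    then show ?case by (metis int_of_D.simps(1) int_of_D_eq_0_iff)
  next
    case (DCons a b)
    then obtain c d where t: "t = DCons c d"
      by (metis D.exhaust int_of_D.simps(1) int_of_D_eq_0_iff D.distinct(1))
    with DCons.prems have "int_of_D a = int_of_D c \<and> int_of_D b = int_of_D d"
      by (intro cantor_pair_inject) (auto simp: int_of_D_nonneg)
    with DCons.IH t show ?case by simp
  qed
qed

fun D_hd :: "D \<Rightarrow> D" where
  "D_hd (DCons l r) = l"
| "D_hd DNil = DNil"

fun D_tl :: "D \<Rightarrow> D" where
  "D_tl (DCons l r) = r"
| "D_tl DNil = DNil"

lemma wval_WHd: "wval \<sigma> (WHd a) = D_hd (wval \<sigma> a)"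
  and wval_WTl: "wval \<sigma> (WTl a) = D_tl (wval \<sigma> a)"
  by (cases "wval \<sigma> a"; simp)+

fun pure_aexp :: "aexp \<Rightarrow> bool" where
  "pure_aexp (Num n) = True"
| "pure_aexp (Var x) = True"
| "pure_aexp (Plus a b) = (pure_aexp a \<and> pure_aexp b)"
| "pure_aexp (Sub a b) = (pure_aexp a \<and> pure_aexp b)"
| "pure_aexp (Mult a b) = (pure_aexp a \<and> pure_aexp b)"
| "pure_aexp (Less a b) = (pure_aexp a \<and> pure_aexp b)"
| "pure_aexp (Equal a b) = (pure_aexp a \<and> pure_aexp b)"
| "pure_aexp _ = False"

fun pval :: "(name \<Rightarrow> int) \<Rightarrow> aexp \<Rightarrow> int" where
  "pval s (Num n) = n"
| "pval s (Var x) = s x"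
| "pval s (Plus a b) = pval s a + pval s b"
| "pval s (Sub a b) = pval s a - pval s b"
| "pval s (Mult a b) = pval s a * pval s b"
| "pval s (Less a b) = (if pval s a < pval s b then 1 else 0)"
| "pval s (Equal a b) = (if pval s a = pval s b then 1 else 0)"
| "pval s _ = 0"

lemma aval_pure: "pure_aexp e \<Longrightarrow> aval i p (sc, ar, F, os) e = pval sc e"
  by (induction e) auto

inductive pexec :: "com \<Rightarrow> (name \<Rightarrow> int) \<Rightarrow> (name \<Rightarrow> int) \<Rightarrow> bool" where
  PSkip: "pexec Skip s s"
| PAssign: "pure_aexp e \<Longrightarrow> pexec (Assign x e) s (s(x := pval s e))"
| PSeq: "pexec c1 s s1 \<Longrightarrow> pexec c2 s1 s2 \<Longrightarrow> pexec (Seq c1 c2) s s2"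
| PIfT: "pure_aexp e \<Longrightarrow> pval s e \<noteq> 0 \<Longrightarrow> pexec c1 s s' \<Longrightarrow> pexec (If e c1 c2) s s'"
| PIfF: "pure_aexp e \<Longrightarrow> pval s e = 0 \<Longrightarrow> pexec c2 s s' \<Longrightarrow> pexec (If e c1 c2) s s'"
| PWhileF: "pure_aexp e \<Longrightarrow> pval s e = 0 \<Longrightarrow> pexec (While e c) s s"
| PWhileT: "pure_aexp e \<Longrightarrow> pval s e \<noteq> 0 \<Longrightarrow> pexec c s s1 \<Longrightarrow> pexec (While e c) s1 s2 \<Longrightarrow>
    pexec (While e c) s s2"

inductive_cases PSeqE: "pexec (Seq c1 c2) s s'"

lemma PAssign_eq: "pure_aexp e \<Longrightarrow> s' = s(x := pval s e) \<Longrightarrow> pexec (Assign x e) s s'"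
  using PAssign by simp

lemma PSeq_Assign: "pure_aexp e \<Longrightarrow> pexec c (s(x := pval s e)) s' \<Longrightarrow> pexec (Seq (Assign x e) c) s s'"
  using PSeq PAssign by blast

lemma PSeq_iff: "pexec (Seq c1 c2) s s2 \<longleftrightarrow> (\<exists>s1. pexec c1 s s1 \<and> pexec c2 s1 s2)"
  by (blast intro: PSeq elim: PSeqE)

lemma pexec_imp_exec: "pexec c s s' \<Longrightarrow> exec L i p io t c (s, ar, F, os) (s', ar, F, os)"
proof (induction rule: pexec.induct)
  case (PAssign e x s)
  have "exec L i p io t (Assign x e) (s, ar, F, os) (s(x := aval i p (s, ar, F, os) e), ar, F, os)"
    by (rule ExAssign) (rule refl)
  then show ?case by (simp only: aval_pure[OF PAssign])
qed (auto intro: exec.intros simp: aval_pure)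

fun assigned :: "com \<Rightarrow> name set" where
  "assigned (Assign x e) = {x}"
| "assigned (Seq c1 c2) = assigned c1 \<union> assigned c2"
| "assigned (If e c1 c2) = assigned c1 \<union> assigned c2"
| "assigned (While e c) = assigned c"
| "assigned _ = {}"

lemma pexec_unassigned: "pexec c s s' \<Longrightarrow> x \<notin> assigned c \<Longrightarrow> s' x = s x"
  by (induction rule: pexec.induct) auto

inductive_cases execE:
  "exec L i p io t Skip s s'" "exec L i p io t (Assign x e) s s'"
  "exec L i p io t (ArrSet x e1 e2) s s'" "exec L i p io t (SetReqField k f e) s s'"
  "exec L i p io t (SetProvField f e) s s'" "exec L i p io t (Seq c1 c2) s s'"
  "exec L i p io t (If e c1 c2) s s'" "exec L i p io t (While e c) s s'"
  "exec L i p io t (CallF x k f args) s s'" "exec L i p io t (Output e) s s'"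

lemma exec_deterministic: "exec L i p io t c s s1 \<Longrightarrow> exec L i p io t c s s2 \<Longrightarrow> s1 = s2"
proof (induction arbitrary: s2 rule: exec.induct)
  case ExSeq then show ?case by (blast elim: execE(6))
next
  case ExIfT then show ?case by (blast elim: execE(7))
next
  case ExIfF then show ?case by (blast elim: execE(7))
next
  case ExWhileF then show ?case by (blast elim: execE(8))
next
  case ExWhileT then show ?case by (blast elim: execE(8))
next
  case (ExCall s sc ar F os t c ks k n f L ps body re args i p s1 sc1 ar1 F1 os1 io x)
  from ExCall.prems show ?case
  proof (rule execE(9))
    fix sc' ar' F' os' c' ks' ps' body' re' sc1' ar1' F1' os1'
    assume shape: "t = WNode c' ks'" "s = (sc', ar', F', os')"
      and s2: "s2 = (sc'(x := aval i (p @ [k]) (sc1', ar1', F1', os1') re'), ar', F1', os1')"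
      and find: "find (\<lambda>d. fd_name d = f)
        (funs_of L (Some (c_requires c' ! k)) (w_comp (ks' ! k))) = Some (FDef f ps' body' re')"
      and run: "exec L i (p @ [k]) (Some (c_requires c' ! k)) (ks' ! k) body'
        (bind_params ps' (map (aval i p (sc', ar', F', os')) args), \<lambda>_ _. 0, F', os')
        (sc1', ar1', F1', os1')"
    have same: "c' = c" "ks' = ks" "sc' = sc" "ar' = ar" "F' = F" "os' = os"
      using shape ExCall.hyps(1,2) by simp_all
    have "FDef f ps' body' re' = FDef f ps body re"
      using find ExCall.hyps(5,6) unfolding same by simp
    then have callee: "ps' = ps" "body' = body" "re' = re" by simp_all
    have "s1 = (sc1', ar1', F1', os1')"
      by (rule ExCall.IH) (use run in \<open>simp add: same callee ExCall.hyps(1,5)\<close>)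
    then show ?thesis using s2 ExCall.hyps(1,9) unfolding same callee by simp
  qed
qed (erule execE; simp)+

definition pair_aexp :: "aexp \<Rightarrow> aexp \<Rightarrow> aexp" where
  "pair_aexp a b = Plus (Plus (Mult (Plus a b) (Plus a b)) b) (Num 1)"

lemma pure_pair_aexp [simp]: "pure_aexp (pair_aexp a b) \<longleftrightarrow> pure_aexp a \<and> pure_aexp b"
  by (simp add: pair_aexp_def)

lemma pval_pair_aexp [simp]: "pval s (pair_aexp a b) = cantor_pair (pval s a) (pval s b)"
  by (simp add: pair_aexp_def cantor_pair_def)

definition isqrt_com :: "name \<Rightarrow> name \<Rightarrow> com" where
  "isqrt_com z q = While (Less (Mult (Plus (Var q) (Num 1)) (Plus (Var q) (Num 1))) (Var z))
     (Assign q (Plus (Var q) (Num 1)))"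

lemma isqrt_com_correct:
  assumes "z \<noteq> q" "0 \<le> s q" "s q \<le> m" "m * m < s z" "s z \<le> (m + 1) * (m + 1)"
  shows "pexec (isqrt_com z q) s (s(q := m))"
  using assms
proof (induction "nat (m - s q)" arbitrary: s)
  case 0
  then have m: "m = s q" by simp
  have "pexec (isqrt_com z q) s s"
    unfolding isqrt_com_def by (rule PWhileF) (use 0(6) in \<open>simp_all add: m\<close>)
  then show ?case by (simp add: m)
next
  case (Suc k)
  let ?s = "s(q := s q + 1)"
  have "(s q + 1) * (s q + 1) \<le> m * m"
    using Suc.hyps(2) Suc.prems(2) by (intro mult_mono) auto
  then have cond: "pval s (Less (Mult (Plus (Var q) (Num 1)) (Plus (Var q) (Num 1))) (Var z)) \<noteq> 0"
    using Suc.prems(4) by simp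
  have step: "pexec (Assign q (Plus (Var q) (Num 1))) s ?s"
    by (rule PAssign_eq) simp_all
  have "pexec (isqrt_com z q) ?s (?s(q := m))"
    by (rule Suc.hyps(1)) (use Suc.hyps(2) Suc.prems in auto)
  then have "pexec (isqrt_com z q) ?s (s(q := m))" by simp
  from PWhileT[OF _ cond step this[unfolded isqrt_com_def]] show ?case
    unfolding isqrt_com_def by simp
qed

definition unpair_com :: "name \<Rightarrow> name \<Rightarrow> name \<Rightarrow> name \<Rightarrow> com" where
  "unpair_com l r z q = If (Var z)
     (Seq (Assign q (Num 0)) (Seq (isqrt_com z q)
       (Seq (Assign r (Sub (Sub (Var z) (Num 1)) (Mult (Var q) (Var q))))
         (Assign l (Sub (Var q) (Var r))))))
     (Seq (Assign l (Num 0)) (Assign r (Num 0)))"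

lemma assigned_unpair_com [simp]: "assigned (unpair_com l r z q) = {l, r, q}"
  by (auto simp: unpair_com_def isqrt_com_def)

lemma unpair_com_correct:
  assumes "s z = int_of_D t" "distinct [l, r, z, q]"
  shows "\<exists>s'. pexec (unpair_com l r z q) s s' \<and> s' l = int_of_D (D_hd t) \<and> s' r = int_of_D (D_tl t)"
proof (cases t)
  case DNil
  have "pexec (unpair_com l r z q) s (s(l := 0, r := 0))"
    unfolding unpair_com_def
    by (rule PIfF, simp_all add: assms DNil, rule PSeq[OF PAssign_eq PAssign_eq]) simp_all
  with assms DNil show ?thesis by auto
next
  case (DCons x y)
  define a b where "a = int_of_D x" and "b = int_of_D y"
  have ab: "0 \<le> a" "0 \<le> b" using int_of_D_nonneg by (simp_all add: a_def b_def)
  have z: "s z = cantor_pair a b" using assms DCons by (simp add: a_def b_def)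
  have init: "pexec (Assign q (Num 0)) s (s(q := 0))"
    by (rule PAssign_eq) simp_all
  have "pexec (isqrt_com z q) (s(q := 0)) (s(q := 0, q := a + b))"
    by (rule isqrt_com_correct) (use assms(2) ab z in \<open>auto simp: cantor_pair_def algebra_simps\<close>)
  then have sqrt: "pexec (isqrt_com z q) (s(q := 0)) (s(q := a + b))" by simp
  have right: "pexec (Assign r (Sub (Sub (Var z) (Num 1)) (Mult (Var q) (Var q))))
      (s(q := a + b)) (s(q := a + b, r := b))"
    by (rule PAssign_eq) (use assms(2) z in \<open>simp_all add: cantor_pair_def\<close>)
  have left: "pexec (Assign l (Sub (Var q) (Var r))) (s(q := a + b, r := b))
      (s(q := a + b, r := b, l := a))"
    by (rule PAssign_eq) (use assms in simp_all)
  have "s z \<noteq> 0" using z ab cantor_pair_pos by fastforce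
  then have "pexec (unpair_com l r z q) s (s(q := a + b, r := b, l := a))"
    unfolding unpair_com_def
      by (intro PIfT PSeq[OF init] PSeq[OF sqrt] PSeq[OF right left]) simp_all
  then show ?thesis using assms(2) DCons by (intro exI) (auto simp: a_def b_def)
qed

section \<open>Compiling WHILE programs into the arithmetic fragment\<close>

(* Register 2x holds the code of WHILE variable x; odd registers are scratch space. *)
definition represents :: "(name \<Rightarrow> int) \<Rightarrow> (nat \<Rightarrow> D) \<Rightarrow> bool" where
  "represents s \<sigma> \<longleftrightarrow> (\<forall>x. s (2 * x) = int_of_D (\<sigma> x))"

lemma represents_pexec:
  assumes "pexec c s s'" "\<forall>x \<in> assigned c. odd x" "represents s \<sigma>"
  shows "represents s' \<sigma>"
  unfolding represents_def
proof
  fix x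
  have "2 * x \<notin> assigned c" using assms(2) dvd_triv_left by blast
  then show "s' (2 * x) = int_of_D (\<sigma> x)"
    using pexec_unassigned[OF assms(1)] assms(3) unfolding represents_def by simp
qed

fun compile_wexp :: "wexp \<Rightarrow> nat \<Rightarrow> com" where
  "compile_wexp (WVar x) d = Assign (2 * d + 1) (Var (2 * x))"
| "compile_wexp WNilE d = Assign (2 * d + 1) (Num 0)"
| "compile_wexp (WConsE a b) d = Seq (compile_wexp a (d + 1)) (Seq (compile_wexp b (d + 2))
     (Assign (2 * d + 1) (pair_aexp (Var (2 * d + 3)) (Var (2 * d + 5)))))"
| "compile_wexp (WHd a) d = Seq (compile_wexp a (d + 1))
     (unpair_com (2 * d + 1) (2 * d + 5) (2 * d + 3) (2 * d + 7))"
| "compile_wexp (WTl a) d = Seq (compile_wexp a (d + 1))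
     (unpair_com (2 * d + 5) (2 * d + 1) (2 * d + 3) (2 * d + 7))"

lemma assigned_compile_wexp: "assigned (compile_wexp e d) \<subseteq> {x. odd x \<and> 2 * d + 1 \<le> x}"
proof (induction e arbitrary: d)
  case (WConsE a b)
  from WConsE.IH(1)[of "d + 1"] WConsE.IH(2)[of "d + 2"] show ?case by auto
next
  case (WHd a)
  from WHd.IH[of "d + 1"] show ?case by auto
next
  case (WTl a)
  from WTl.IH[of "d + 1"] show ?case by auto
qed auto

lemma compile_wexp_correct:
  "represents s \<sigma> \<Longrightarrow> \<exists>s'. pexec (compile_wexp e d) s s' \<and> s' (2 * d + 1) = int_of_D (wval \<sigma> e)"
proof (induction e arbitrary: d s)
  case (WVar x)
  then show ?case by (auto intro!: exI PAssign simp: represents_def)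
next
  case WNilE
  show ?case by (auto intro!: exI PAssign)
next
  case (WConsE a b)
  obtain s1 where s1: "pexec (compile_wexp a (d + 1)) s s1" "s1 (2 * d + 3) = int_of_D (wval \<sigma> a)"
    using WConsE.IH(1)[OF WConsE.prems, of "d + 1"] by (auto simp: numeral_eq_Suc)
  then have "represents s1 \<sigma>"
    using assigned_compile_wexp[of a "d + 1"]
      by (intro represents_pexec[OF s1(1) _ WConsE.prems]) auto
  then obtain s2 where s2: "pexec (compile_wexp b (d + 2)) s1 s2"
      "s2 (2 * d + 5) = int_of_D (wval \<sigma> b)"
    using WConsE.IH(2)[of s1 "d + 2"] by (auto simp: numeral_eq_Suc)
  have "2 * d + 3 \<notin> assigned (compile_wexp b (d + 2))"
    using assigned_compile_wexp[of b "d + 2"] by auto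
  then have "s2 (2 * d + 3) = s1 (2 * d + 3)" by (rule pexec_unassigned[OF s2(1)])
  with s1 s2 show ?case by (auto intro!: exI PSeq PAssign)
next
  case (WHd a)
  obtain s1 where s1: "pexec (compile_wexp a (d + 1)) s s1" "s1 (2 * d + 3) = int_of_D (wval \<sigma> a)"
    using WHd.IH[OF WHd.prems, of "d + 1"] by (auto simp: numeral_eq_Suc)
  moreover obtain s2 where "pexec (unpair_com (2 * d + 1) (2 * d + 5) (2 * d + 3) (2 * d + 7))
      s1 s2"
      "s2 (2 * d + 1) = int_of_D (D_hd (wval \<sigma> a))"
    using unpair_com_correct[of s1 "2 * d + 3" _ "2 * d + 1" "2 * d + 5" "2 * d + 7"] s1(2) by auto
  ultimately show ?case unfolding compile_wexp.simps wval_WHd by (blast intro: PSeq)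
next
  case (WTl a)
  obtain s1 where s1: "pexec (compile_wexp a (d + 1)) s s1" "s1 (2 * d + 3) = int_of_D (wval \<sigma> a)"
    using WTl.IH[OF WTl.prems, of "d + 1"] by (auto simp: numeral_eq_Suc)
  moreover obtain s2 where "pexec (unpair_com (2 * d + 5) (2 * d + 1) (2 * d + 3) (2 * d + 7))
      s1 s2"
      "s2 (2 * d + 1) = int_of_D (D_tl (wval \<sigma> a))"
    using unpair_com_correct[of s1 "2 * d + 3" _ "2 * d + 5" "2 * d + 1" "2 * d + 7"] s1(2) by auto
  ultimately show ?case unfolding compile_wexp.simps wval_WTl by (blast intro: PSeq)
qed

lemma compile_wexp_represents:
  assumes "represents s \<sigma>"
  obtains s' where "pexec (compile_wexp e 0) s s'" "s' 1 = int_of_D (wval \<sigma> e)" "represents s' \<sigma>"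
proof -
  obtain s' where "pexec (compile_wexp e 0) s s'" "s' 1 = int_of_D (wval \<sigma> e)"
    using compile_wexp_correct[OF assms, of e 0] by auto
  moreover have "represents s' \<sigma>"
    by (rule represents_pexec[OF calculation(1) _ assms])
      (use assigned_compile_wexp[of e 0] in auto)
  ultimately show thesis by (rule that)
qed

fun compile_wcom :: "wcom \<Rightarrow> com" where
  "compile_wcom (WAsg x e) = Seq (compile_wexp e 0) (Assign (2 * x) (Var 1))"
| "compile_wcom (WSeq c1 c2) = Seq (compile_wcom c1) (compile_wcom c2)"
| "compile_wcom (WWhile e c) = Seq (compile_wexp e 0)
     (While (Var 1) (Seq (compile_wcom c) (compile_wexp e 0)))"

lemma compile_wcom_correct:
  "wexec c \<sigma> \<sigma>' \<Longrightarrow> represents s \<sigma> \<Longrightarrow> \<exists>s'. pexec (compile_wcom c) s s' \<and> represents s' \<sigma>'"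
proof (induction arbitrary: s rule: wexec.induct)
  case (1 x e \<sigma>)
  obtain s1 where s1: "pexec (compile_wexp e 0) s s1" "s1 1 = int_of_D (wval \<sigma> e)" "represents s1 \<sigma>"
    using compile_wexp_represents[OF "1"] .
  then have "represents (s1(2 * x := s1 1)) (\<sigma>(x := wval \<sigma> e))"
    by (auto simp: represents_def)
  moreover have "pexec (compile_wcom (WAsg x e)) s (s1(2 * x := s1 1))"
    unfolding compile_wcom.simps by (rule PSeq[OF s1(1) PAssign_eq]) simp_all
  ultimately show ?case by blast
next
  case (2 c1 \<sigma> \<sigma>1 c2 \<sigma>2)
  then show ?case by (fastforce intro: PSeq)
next
  case (3 \<sigma> e c)
  obtain s1 where s1: "pexec (compile_wexp e 0) s s1" "s1 1 = int_of_D (wval \<sigma> e)" "represents s1 \<sigma>"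
    using compile_wexp_represents[OF "3.prems"] .
  with "3.hyps" show ?case by (auto intro!: exI PSeq PWhileF)
next
  case (4 \<sigma> e c \<sigma>1 \<sigma>2)
  let ?loop = "While (Var 1) (Seq (compile_wcom c) (compile_wexp e 0))"
  obtain s1 where s1: "pexec (compile_wexp e 0) s s1" "s1 1 = int_of_D (wval \<sigma> e)" "represents s1 \<sigma>"
    using compile_wexp_represents[OF "4.prems"] .
  obtain s2 where s2: "pexec (compile_wcom c) s1 s2" "represents s2 \<sigma>1"
    using "4.IH"(1)[OF s1(3)] by auto
  obtain s4 where "pexec (compile_wcom (WWhile e c)) s2 s4" "represents s4 \<sigma>2"
    using "4.IH"(2)[OF s2(2)] by auto
  then obtain s3 where s3: "pexec (compile_wexp e 0) s2 s3" "pexec ?loop s3 s4" "represents s4 \<sigma>2"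
    by (auto simp: PSeq_iff)
  have "pval s1 (Var 1) \<noteq> 0" using s1(2) "4.hyps"(1) by (simp add: int_of_D_eq_0_iff)
  then have "pexec ?loop s1 s4" using s2(1) s3(1,2) by (auto intro: PWhileT PSeq)
  with s1(1) s3(3) show ?case by (auto intro: PSeq)
qed

section \<open>A self-reproducing command\<close>

definition unary_com :: com where
  "unary_com = While (Less (Num 0) (Var 7))
     (Seq (Assign 5 (pair_aexp (Num 0) (Var 5))) (Assign 7 (Sub (Var 7) (Num 1))))"

lemma unary_com_correct:
  "s 7 = int k \<Longrightarrow> s 5 = int_of_D (enc_nat m) \<Longrightarrow>
    \<exists>s'. pexec unary_com s s' \<and> s' 5 = int_of_D (enc_nat (m + k))"
proof (induction k arbitrary: m s)
  case 0
  then show ?case unfolding unary_com_def by (auto intro!: exI PWhileF)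
next
  case (Suc k)
  let ?s = "s(5 := int_of_D (enc_nat (Suc m)), 7 := int k)"
  have body: "pexec (Seq (Assign 5 (pair_aexp (Num 0) (Var 5))) (Assign 7 (Sub (Var 7) (Num 1))))
      s ?s"
    by (intro PSeq_Assign PAssign_eq) (use Suc.prems in simp_all)
  have "?s 7 = int k" "?s 5 = int_of_D (enc_nat (Suc m))" by simp_all
  from Suc.IH[OF this] obtain s' where "pexec unary_com ?s s'"
      "s' 5 = int_of_D (enc_nat (Suc m + k))"
    by blast
  moreover have "pval s (Less (Num 0) (Var 7)) \<noteq> 0" using Suc.prems by simp
  ultimately show ?case unfolding unary_com_def
    by (auto intro!: exI PWhileT[OF _ _ body])
qed

fun replace_at :: "D \<Rightarrow> bool list \<Rightarrow> D \<Rightarrow> D" where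
  "replace_at t [] x = x"
| "replace_at t (b # p) x =
     (if b then DCons (D_hd t) (replace_at (D_tl t) p x)
        else DCons (replace_at (D_hd t) p x) (D_tl t))"

(* Register 4d+9 holds the current subtree; the child on the path moves to register 4(d+1)+9
   and its sibling waits in register 4d+11 until the two are paired again.  Register 3 holds the
   replacement. *)
fun replace_com :: "bool list \<Rightarrow> nat \<Rightarrow> com" where
  "replace_com [] d = Assign (4 * d + 9) (Var 3)"
| "replace_com (b # p) d =
     (let (l, r) = if b then (4 * d + 11, 4 * Suc d + 9) else (4 * Suc d + 9, 4 * d + 11) in
      Seq (unpair_com l r (4 * d + 9) 1)
        (Seq (replace_com p (Suc d)) (Assign (4 * d + 9) (pair_aexp (Var l) (Var r)))))"

lemma assigned_replace_com: "assigned (replace_com p d) \<subseteq> insert 1 {x. odd x \<and> 4 * d + 9 \<le> x}"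
proof (induction p arbitrary: d)
  case (Cons b p)
  from Cons.IH[of "Suc d"] show ?case by auto
qed simp

lemma replace_com_correct:
  "s (4 * d + 9) = int_of_D t \<Longrightarrow> s 3 = int_of_D x \<Longrightarrow>
    \<exists>s'. pexec (replace_com p d) s s' \<and> s' (4 * d + 9) = int_of_D (replace_at t p x)"
proof (induction p arbitrary: d s t)
  case Nil
  then show ?case by (auto intro!: exI PAssign)
next
  case (Cons b p)
  define l r where "l = (if b then 4 * d + 11 else 4 * Suc d + 9)"
    and "r = (if b then 4 * Suc d + 9 else 4 * d + 11)"
  have "distinct [l, r, 4 * d + 9, 1]" by (simp add: l_def r_def)
  then obtain s1 where s1: "pexec (unpair_com l r (4 * d + 9) 1) s s1"
    "s1 l = int_of_D (D_hd t)" "s1 r = int_of_D (D_tl t)"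
    using unpair_com_correct[of s "4 * d + 9" t l r 1] Cons.prems(1) by blast
  have "s1 3 = int_of_D x"
    using pexec_unassigned[OF s1(1)] Cons.prems(2) by (simp add: l_def r_def)
  moreover have "s1 (4 * Suc d + 9) = int_of_D (if b then D_tl t else D_hd t)"
    using s1 by (cases b) (simp_all add: l_def r_def)
  ultimately obtain s2 where s2: "pexec (replace_com p (Suc d)) s1 s2"
    "s2 (4 * Suc d + 9) = int_of_D (replace_at (if b then D_tl t else D_hd t) p x)"
    using Cons.IH[of s1 "Suc d" "if b then D_tl t else D_hd t"] by blast
  have "4 * d + 11 \<notin> assigned (replace_com p (Suc d))"
    using assigned_replace_com[of p "Suc d"] by auto
  then have "s2 (4 * d + 11) = s1 (4 * d + 11)" by (rule pexec_unassigned[OF s2(1)])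
  then have "pexec (Assign (4 * d + 9) (pair_aexp (Var l) (Var r))) s2
      (s2(4 * d + 9 := int_of_D (replace_at t (b # p) x)))"
    using s1(2,3) s2(2) by (intro PAssign_eq) (auto simp: l_def r_def)
  moreover have "replace_com (b # p) d = Seq (unpair_com l r (4 * d + 9) 1)
      (Seq (replace_com p (Suc d)) (Assign (4 * d + 9) (pair_aexp (Var l) (Var r))))"
    by (simp add: l_def r_def)
  ultimately show ?case using s1(1) s2(1) by (auto intro!: PSeq)
qed

definition quine_com :: "int \<Rightarrow> bool list \<Rightarrow> com" where
  "quine_com n p = Seq (Assign 9 (Num n)) (Seq (Assign 5 (Num 0)) (Seq (Assign 7 (Var 9))
     (Seq unary_com (Seq (Assign 3 (pair_aexp (Num 1) (Var 5))) (replace_com p 0)))))"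

lemma assigned_quine_com: "assigned (quine_com n p) \<subseteq> {x. odd x}"
  using assigned_replace_com[of p 0] by (auto simp: quine_com_def unary_com_def)

lemma int_of_D_enc_int: "0 \<le> n \<Longrightarrow> int_of_D (enc_int n) = cantor_pair 1 (int_of_D (enc_nat (nat n)))"
  by (simp add: enc_int_def enc_bool_def cantor_pair_def)

lemma quine_com_correct:
  "\<exists>s'. pexec (quine_com (int_of_D T) p) s s' \<and>
     s' 9 = int_of_D (replace_at T p (enc_int (int_of_D T)))"
proof -
  let ?n = "int_of_D T"
  let ?s = "s(9 := ?n, 5 := 0, 7 := ?n)"
  obtain s1 where s1: "pexec unary_com ?s s1" "s1 5 = int_of_D (enc_nat (nat ?n))"
    using unary_com_correct[of ?s "nat ?n" 0] int_of_D_nonneg by auto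
  have "9 \<notin> assigned unary_com" by (simp add: unary_com_def)
  then have "s1 9 = ?n" using pexec_unassigned[OF s1(1)] by simp
  let ?s2 = "s1(3 := int_of_D (enc_int ?n))"
  have enc: "pexec (Assign 3 (pair_aexp (Num 1) (Var 5))) s1 ?s2"
    using s1(2) by (intro PAssign_eq) (simp_all add: int_of_D_enc_int int_of_D_nonneg)
  obtain s3 where s3: "pexec (replace_com p 0) ?s2 s3"
      "s3 9 = int_of_D (replace_at T p (enc_int ?n))"
    using replace_com_correct[of ?s2 0 T "enc_int ?n" p] \<open>s1 9 = ?n\<close> by auto
  have "pexec (Seq unary_com (Seq (Assign 3 (pair_aexp (Num 1) (Var 5))) (replace_com p 0))) ?s s3"
    using s1(1) enc s3(1) by (blast intro: PSeq)
  then have "pexec (quine_com ?n p) s s3"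
    unfolding quine_com_def by (intro PSeq_Assign) simp_all
  with s3(2) show ?thesis by blast
qed

section \<open>The diagonal instance\<close>

definition main_iface :: iface where
  "main_iface = Iface 0 [] []"

definition f_iface :: iface where
  "f_iface = Iface 1 [Proto 1 TInt []] []"

definition diag_ifaces :: "iface list" where
  "diag_ifaces = [main_iface, f_iface]"

definition base_comp :: comp where
  "base_comp = Comp 0 [0] [1] [FDef main_name [] (Seq (CallF 0 0 1 []) (Output (Var 0))) (Num 0)]"

definition two_level :: "comp \<Rightarrow> wtree" where
  "two_level X = WNode base_comp [WNode X []]"

(* The position (True = right subtree) of the literal n of diag_body P n k in diag_instance P n. *)
definition hole_path :: "bool list" where
  "hole_path = [True, True, True, False, False, True, True, True, True, False, False, True,
     True, True, False, True, False, True, False, True, True, False, True, False]"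

definition diag_body :: "wcom \<Rightarrow> int \<Rightarrow> int \<Rightarrow> com" where
  "diag_body P n k = Seq (quine_com n hole_path)
     (Seq (Assign 0 (Var 9)) (Seq (compile_wcom P) (Assign 1 (Equal (Var 2) (Num k)))))"

(* The dead branch only makes padded_comp longer than diag_comp. *)
definition padded_comp :: "wcom \<Rightarrow> comp" where
  "padded_comp P = Comp 1 [1] [] [FDef 1 [] (If (Num 0) (diag_body P 0 0) Skip) (Num 1)]"

definition diag_comp :: "wcom \<Rightarrow> int \<Rightarrow> comp" where
  "diag_comp P n =
     Comp 2 [1] [] [FDef 1 [] (diag_body P n (int_of_D (enc_wtree (two_level (padded_comp P)))))
       (Var 1)]"

definition diag_comps :: "wcom \<Rightarrow> int \<Rightarrow> comp list" where
  "diag_comps P n = [diag_comp P n, base_comp, padded_comp P]"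

definition diag_reqs :: "(bool list \<times> int) list" where
  "diag_reqs = [([], 1)]"

definition diag_instance :: "wcom \<Rightarrow> int \<Rightarrow> D" where
  "diag_instance P n = enc_instance diag_reqs diag_ifaces (diag_comps P n)
     (two_level (padded_comp P))"

definition self_code :: "wcom \<Rightarrow> int" where
  "self_code P = int_of_D (diag_instance P 0)"

lemma replace_at_diag_instance:
  "replace_at (diag_instance P 0) hole_path (enc_int n) = diag_instance P n"
  by (simp add: diag_instance_def enc_instance_def diag_comps_def diag_comp_def diag_body_def
      quine_com_def hole_path_def tag_def enc_dl_def)

lemma diag_body_correct:
  assumes "wexec P (\<lambda>v. if v = 0 then diag_instance P (self_code P) else DNil) \<sigma>'"
  shows "\<exists>s. pexec (diag_body P (self_code P) k) (\<lambda>_. 0) s \<and>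
    s 1 = (if int_of_D (\<sigma>' 1) = k then 1 else 0)"
proof -
  obtain s1 where s1: "pexec (quine_com (self_code P) hole_path) (\<lambda>_. 0) s1"
      "s1 9 = int_of_D (diag_instance P (self_code P))"
    using quine_com_correct[of "diag_instance P 0" hole_path "\<lambda>_. 0"]
    by (auto simp: replace_at_diag_instance self_code_def)
  let ?s2 = "s1(0 := s1 9)"
  have "s1 (2 * x) = 0" for x
    using pexec_unassigned[OF s1(1), of "2 * x"] assigned_quine_com dvd_triv_left by fastforce
  then have "represents ?s2 (\<lambda>v. if v = 0 then diag_instance P (self_code P) else DNil)"
    using s1(2) by (auto simp: represents_def)
  then obtain s3 where s3: "pexec (compile_wcom P) ?s2 s3" "represents s3 \<sigma>'"
    using compile_wcom_correct[OF assms] by blast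
  then have "s3 2 = int_of_D (\<sigma>' 1)" unfolding represents_def by (metis mult.right_neutral)
  then have compare: "pexec (Assign 1 (Equal (Var 2) (Num k))) s3
      (s3(1 := (if int_of_D (\<sigma>' 1) = k then 1 else 0)))"
    by (intro PAssign_eq) simp_all
  have "pexec (Assign 0 (Var 9)) s1 ?s2" by (rule PAssign_eq) simp_all
  with s1(1) s3(1) compare have "pexec (diag_body P (self_code P) k) (\<lambda>_. 0)
      (s3(1 := (if int_of_D (\<sigma>' 1) = k then 1 else 0)))"
    unfolding diag_body_def by (blast intro: PSeq)
  then show ?thesis by auto
qed

lemma funs_of_f_iface: "c_funs X = [FDef 1 ps body re] \<Longrightarrow> funs_of diag_ifaces (Some 1) X = c_funs X"
  by (simp add: funs_of_def iface_of_def diag_ifaces_def main_iface_def f_iface_def)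

lemma exec_two_level:
  assumes X: "c_funs X = [FDef 1 [] body re]" and "pure_aexp re" and body: "pexec body (\<lambda>_. 0) s"
  shows "exec diag_ifaces [] [] None (two_level X) (Seq (CallF 0 0 1 []) (Output (Var 0)))
    ((\<lambda>_. 0), (\<lambda>_ _. 0), (\<lambda>_ _. 0), [])
    ((\<lambda>_. 0)(0 := pval s re), (\<lambda>_ _. 0), (\<lambda>_ _. 0), [pval s re])"
proof -
  let ?init = "((\<lambda>_. 0), (\<lambda>_ _. 0), (\<lambda>_ _. 0), []) :: state"
  have callee: "exec diag_ifaces [] ([] @ [0]) (Some (c_requires base_comp ! 0))
      ([WNode X []] ! 0) body
      (bind_params [] (map (aval [] [] ?init) []), \<lambda>_ _. 0, \<lambda>_ _. 0, []) (s, \<lambda>_ _. 0, \<lambda>_ _. 0, [])"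
    using pexec_imp_exec[OF body] by (simp add: bind_params_def)
  have "find (\<lambda>d. fd_name d = 1) (funs_of diag_ifaces (Some (c_requires base_comp ! 0))
      (w_comp ([WNode X []] ! 0))) = Some (FDef 1 [] body re)"
    using X by (simp add: base_comp_def funs_of_f_iface del: One_nat_def)
  from ExCall[OF refl refl _ _ refl this _ callee refl]
  have "exec diag_ifaces [] [] None (two_level X) (CallF 0 0 1 []) ?init
      ((\<lambda>_. 0)(0 := pval s re), (\<lambda>_ _. 0), (\<lambda>_ _. 0), [])"
    using aval_pure[OF \<open>pure_aexp re\<close>] by (simp add: base_comp_def two_level_def)
  moreover have "exec diag_ifaces [] [] None (two_level X) (Output (Var 0))
      ((\<lambda>_. 0)(0 := pval s re), (\<lambda>_ _. 0), (\<lambda>_ _. 0), [])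
      ((\<lambda>_. 0)(0 := pval s re), (\<lambda>_ _. 0), (\<lambda>_ _. 0), [pval s re])"
    using ExOut[of "((\<lambda>_. 0)(0 := pval s re), \<lambda>_ _. 0, \<lambda>_ _. 0, [])" "(\<lambda>_. 0)(0 := pval s re)"
        "\<lambda>_ _. 0" "\<lambda>_ _. 0" "[]" diag_ifaces "[]" "[]" None "two_level X" "Var 0"]
    by simp
  ultimately show ?thesis by (rule ExSeq)
qed

lemma runs_output_two_level_iff:
  assumes "c_funs X = [FDef 1 [] body re]" "pure_aexp re" "pexec body (\<lambda>_. 0) s"
  shows "runs_output diag_ifaces (two_level X) [] out \<longleftrightarrow> out = pval s re"
proof -
  note run = exec_two_level[OF assms]
  have "find (\<lambda>d. fd_name d = main_name) (c_funs (w_comp (two_level X))) =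
      Some (FDef main_name [] (Seq (CallF 0 0 1 []) (Output (Var 0))) (Num 0))"
    by (simp add: two_level_def base_comp_def)
  then have "runs_output diag_ifaces (two_level X) [] out \<longleftrightarrow>
      (\<exists>s'. exec diag_ifaces [] [] None (two_level X) (Seq (CallF 0 0 1 []) (Output (Var 0)))
        ((\<lambda>_. 0), (\<lambda>_ _. 0), (\<lambda>_ _. 0), []) s' \<and> snd (snd (snd s')) = [out])"
    unfolding runs_output_def by simp
  also have "\<dots> \<longleftrightarrow> [pval s re] = [out]"
  proof
    assume "\<exists>s'. exec diag_ifaces [] [] None (two_level X) (Seq (CallF 0 0 1 []) (Output (Var 0)))
        ((\<lambda>_. 0), (\<lambda>_ _. 0), (\<lambda>_ _. 0), []) s' \<and> snd (snd (snd s')) = [out]"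
    then obtain s' where run': "exec diag_ifaces [] [] None (two_level X)
        (Seq (CallF 0 0 1 []) (Output (Var 0)))
        ((\<lambda>_. 0), (\<lambda>_ _. 0), (\<lambda>_ _. 0), []) s'" and out: "snd (snd (snd s')) = [out]"
      by blast
    from exec_deterministic[OF run run'] out show "[pval s re] = [out]" by auto
  qed (use run in auto)
  finally show ?thesis by auto
qed

lemma system_based_two_level_iff:
  assumes "base_comp \<in> set Lc" "\<forall>X \<in> set Lc. X \<noteq> base_comp \<longrightarrow> c_requires X = []"
  shows "system_based Lc base_comp S \<longleftrightarrow>
    (\<exists>X \<in> set Lc. X \<noteq> base_comp \<and> 1 \<in> set (c_provides X) \<and> S = two_level X)"
proof
  assume "system_based Lc base_comp S"
  then obtain ks where S: "S = WNode base_comp ks" and "validTs Lc [base_comp] [1] ks"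
    unfolding system_based_def by (cases S) (simp add: base_comp_def)
  then obtain t ts where ks: "ks = t # ts" and t: "validT Lc [base_comp] (Some 1) t"
    and "validTs Lc [base_comp] [] ts"
    by (cases ks) auto
  then have "ts = []" by (cases ts) auto
  obtain X ks' where t_def: "t = WNode X ks'" by (cases t)
  with t have X: "X \<in> set Lc" "X \<noteq> base_comp" "1 \<in> set (c_provides X)"
    and "validTs Lc [X, base_comp] (c_requires X) ks'"
    by auto
  moreover have "c_requires X = []" using X assms(2) by blast
  ultimately have "ks = [WNode X []]" using ks \<open>ts = []\<close> t_def by (cases ks') auto
  with S X show "\<exists>X \<in> set Lc. X \<noteq> base_comp \<and> 1 \<in> set (c_provides X) \<and> S = two_level X"
    by (auto simp: two_level_def)
next
  assume "\<exists>X \<in> set Lc. X \<noteq> base_comp \<and> 1 \<in> set (c_provides X) \<and> S = two_level X"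
  with assms show "system_based Lc base_comp S"
    by (auto simp: system_based_def two_level_def base_comp_def)
qed

lemma system_based_diag_comps_iff:
  "system_based (diag_comps P n) base_comp S \<longleftrightarrow>
     S = two_level (padded_comp P) \<or> S = two_level (diag_comp P n)"
  by (subst system_based_two_level_iff)
    (auto simp: diag_comps_def base_comp_def padded_comp_def diag_comp_def)

lemma Rew_CodeB_two_level:
  assumes "c_funs X = [FDef 1 [] body re]" "c_requires X = []"
  shows "Rew_CodeB diag_ifaces (two_level X) =
    loc_copy diag_ifaces None base_comp + loc_iface (iface_of diag_ifaces 1) + 3 + loc_com body"
  using assms funs_of_f_iface[OF assms(1)]
  by (simp add: Rew_CodeB_def two_level_def base_comp_def
      loc_copy_def loc_fdef_def del: One_nat_def)

lemma Rew_CodeB_diag_less_padded: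
  "Rew_CodeB diag_ifaces (two_level (diag_comp P n))
    < Rew_CodeB diag_ifaces (two_level (padded_comp P))"
  by (simp add: Rew_CodeB_two_level diag_comp_def padded_comp_def diag_body_def quine_com_def)

lemma working_padded: "working diag_reqs diag_ifaces (two_level (padded_comp P))"
proof -
  have "pexec (If (Num 0) (diag_body P 0 0) Skip) (\<lambda>_. 0) (\<lambda>_. 0)"
    by (intro PIfF PSkip) simp_all
  then show ?thesis
    by (simp add: working_def diag_reqs_def
      runs_output_two_level_iff[where s = "\<lambda>_. 0"] padded_comp_def)
qed

lemma wf_libs_diag: "wf_libs diag_ifaces (diag_comps P n)"
  by (simp add: wf_libs_def diag_ifaces_def main_iface_def f_iface_def iface_of_def diag_comps_def
      base_comp_def padded_comp_def diag_comp_def)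

lemma esadapt_instance_diag:
  "esadapt_instance diag_reqs diag_ifaces (diag_comps P n) (two_level (padded_comp P))"
  unfolding esadapt_instance_def
  using wf_libs_diag system_based_diag_comps_iff working_padded
  by (auto simp: two_level_def diag_reqs_def)

lemma working_diag_iff:
  assumes "wcomputes P (diag_instance P (self_code P)) y"
  shows "working diag_reqs diag_ifaces (two_level (diag_comp P (self_code P))) \<longleftrightarrow>
    y = enc_wtree (two_level (padded_comp P))"
proof -
  let ?k = "int_of_D (enc_wtree (two_level (padded_comp P)))"
  obtain \<sigma>' where "wexec P (\<lambda>v. if v = 0 then diag_instance P (self_code P) else DNil) \<sigma>'"
      "\<sigma>' 1 = y"
    using assms unfolding wcomputes_def by auto
  then obtain s where "pexec (diag_body P (self_code P) ?k) (\<lambda>_. 0) s"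
      "s 1 = (if int_of_D y = ?k then 1 else 0)"
    using diag_body_correct by blast
  then have "working diag_reqs diag_ifaces (two_level (diag_comp P (self_code P)))
      \<longleftrightarrow> int_of_D y = ?k"
    by (simp add: working_def diag_reqs_def runs_output_two_level_iff[where s = s] diag_comp_def)
  also have "\<dots> \<longleftrightarrow> y = enc_wtree (two_level (padded_comp P))"
    using inj_int_of_D by (auto dest: injD)
  finally show ?thesis .
qed

lemma enc_two_level_diag_ne_padded:
  "enc_wtree (two_level (diag_comp P n)) \<noteq> enc_wtree (two_level (padded_comp P))"
  by (simp add: two_level_def diag_comp_def padded_comp_def tag_def enc_dl_def)

lemma esadapt_codeB_solution_diag_iff:
  "esadapt_codeB_solution diag_reqs diag_ifaces (diag_comps P n) (two_level (padded_comp P)) S \<longleftrightarrow>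
    S = (if working diag_reqs diag_ifaces (two_level (diag_comp P n))
         then two_level (diag_comp P n) else two_level (padded_comp P))"
  using working_padded[of P] Rew_CodeB_diag_less_padded[of P n]
  by (fastforce simp: esadapt_codeB_solution_def system_based_diag_comps_iff two_level_def)

theorem mainTheorem16:
  fixes Env :: "wtree \<Rightarrow> 'ev"
  shows "\<not> (\<exists>P. solves_ESAdapt_codeB P)"
proof
  assume "\<exists>P. solves_ESAdapt_codeB P"
  then obtain P where "solves_ESAdapt_codeB P" ..
  let ?n = "self_code P"
  obtain S where sol: "esadapt_codeB_solution diag_reqs diag_ifaces (diag_comps P ?n)
      (two_level (padded_comp P)) S"
    and computes: "wcomputes P (diag_instance P ?n) (enc_wtree S)"
    using \<open>solves_ESAdapt_codeB P\<close> esadapt_instance_diag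
    unfolding solves_ESAdapt_codeB_def diag_instance_def by blast
  have "working diag_reqs diag_ifaces (two_level (diag_comp P ?n)) \<longleftrightarrow>
      enc_wtree S = enc_wtree (two_level (padded_comp P))"
    by (rule working_diag_iff[OF computes])
  with sol enc_two_level_diag_ne_padded[of P ?n] show False
    by (simp add: esadapt_codeB_solution_diag_iff split: if_splits)
qed

end
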